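(* The price of equitability is $\Omega(n^2)$ with respect to the \textsc{Min-Sum} objective and $\Omega(n)$ with respect to the \textsc{Min-Max} objective, where $n$ is the number of agents.
   Context: An instance $\mathcal{I}$ has agents $N=[n]$, projects $P$, timesteps $T=[\ell]$, and disapproval sets $D_{ik}\subseteq P$. An outcome is $\mathbf{o}\in P^\ell$ and $d_i(\mathbf{o})=|\{k\in T:o_k\in D_{ik}\}|$. An outcome is equitable if $d_i(\mathbf{o})=d_j(\mathbf{o})$ for all $i,j\in N$. For $W\in\{\textsc{Min-Sum},\textsc{Min-Max}\}$, the $W$-value of $\mathbf{o}$ is $\sum_i d_i(\mathbf{o})$ or $\max_i d_i(\mathbf{o})$ respectively. The price of equitability with respect to $W$ is the supremum, over instances admitting at least one equitable outcome, of the ratio between the minimum $W$-value over equitable outcomes and the minimum $W$-value over all outcomes, considered as a function of $n$. *)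

theory Defs
  imports Complex_Main
begin

text \<open>Instances: agents are 0..<n, projects form a finite nonempty set P of naturals,
  timesteps are 0..<l, and D i k is the disapproval set of agent i at timestep k.\<close>

definition is_outcome :: "nat set \<Rightarrow> nat \<Rightarrow> (nat \<Rightarrow> nat) \<Rightarrow> bool" where
  "is_outcome P l oc \<longleftrightarrow> (\<forall>k<l. oc k \<in> P)"

definition disutil :: "(nat \<Rightarrow> nat \<Rightarrow> nat set) \<Rightarrow> nat \<Rightarrow> (nat \<Rightarrow> nat) \<Rightarrow> nat \<Rightarrow> nat" where
  "disutil D l oc i = card {k \<in> {0..<l}. oc k \<in> D i k}"

definition equitable :: "nat \<Rightarrow> (nat \<Rightarrow> nat \<Rightarrow> nat set) \<Rightarrow> nat \<Rightarrow> (nat \<Rightarrow> nat) \<Rightarrow> bool" where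
  "equitable n D l oc \<longleftrightarrow> (\<forall>i<n. \<forall>j<n. disutil D l oc i = disutil D l oc j)"

definition minsum_value :: "nat \<Rightarrow> (nat \<Rightarrow> nat \<Rightarrow> nat set) \<Rightarrow> nat \<Rightarrow> (nat \<Rightarrow> nat) \<Rightarrow> nat" where
  "minsum_value n D l oc = (\<Sum>i<n. disutil D l oc i)"

definition minmax_value :: "nat \<Rightarrow> (nat \<Rightarrow> nat \<Rightarrow> nat set) \<Rightarrow> nat \<Rightarrow> (nat \<Rightarrow> nat) \<Rightarrow> nat" where
  "minmax_value n D l oc = Max (insert 0 (disutil D l oc ` {..<n}))"

definition opt_value ::
  "(nat \<Rightarrow> (nat \<Rightarrow> nat \<Rightarrow> nat set) \<Rightarrow> nat \<Rightarrow> (nat \<Rightarrow> nat) \<Rightarrow> nat)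
   \<Rightarrow> nat \<Rightarrow> nat set \<Rightarrow> (nat \<Rightarrow> nat \<Rightarrow> nat set) \<Rightarrow> nat \<Rightarrow> nat" where
  "opt_value W n P D l = Min {W n D l oc | oc. is_outcome P l oc}"

definition opt_equitable_value ::
  "(nat \<Rightarrow> (nat \<Rightarrow> nat \<Rightarrow> nat set) \<Rightarrow> nat \<Rightarrow> (nat \<Rightarrow> nat) \<Rightarrow> nat)
   \<Rightarrow> nat \<Rightarrow> nat set \<Rightarrow> (nat \<Rightarrow> nat \<Rightarrow> nat set) \<Rightarrow> nat \<Rightarrow> nat" where
  "opt_equitable_value W n P D l = Min {W n D l oc | oc. is_outcome P l oc \<and> equitable n D l oc}"

end

theory Submission
  imports Defs
begin

text \<open>One instance with projects 0, 1, 2 and n timesteps witnesses both bounds. Agent 0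
  suffers at timestep 0 whatever is chosen, and project 0 hurts nobody at the later timesteps,
  so both optima equal 1. At a timestep k \<ge> 1 projects 1 and 2 hurt every agent except k, so
  with S the set of timesteps k \<ge> 1 avoiding project 0, an agent i \<ge> 1 has disutility
  |S - {i}|. Agents in S are thus better off than the other agents i \<ge> 1 unless S is empty or
  full, and S empty leaves all of them better off than agent 0. So in an equitable outcome S is
  full and everybody has disutility n - 2, which is attainable since project 1 also spares
  agent 0. The equitable optima are therefore n (n - 2) and n - 2.\<close>

lemma disutil_le_horizon: "disutil D l oc i \<le> l"
proof -
  have "card {k \<in> {0..<l}. oc k \<in> D i k} \<le> card {0..<l}"
    by (intro card_mono) auto
  then show ?thesis
    unfolding disutil_def by simp
qed

lemma minsum_value_le: "minsum_value n D l oc \<le> n * l"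
  unfolding minsum_value_def using sum_mono[of "{..<n}" "disutil D l oc" "\<lambda>_. l"]
  by (simp add: disutil_le_horizon)

lemma minmax_value_le: "minmax_value n D l oc \<le> l"
  unfolding minmax_value_def by (simp add: disutil_le_horizon)

lemma disutil_le_minsum_value: "i < n \<Longrightarrow> disutil D l oc i \<le> minsum_value n D l oc"
  unfolding minsum_value_def by (intro member_le_sum) auto

lemma disutil_le_minmax_value: "i < n \<Longrightarrow> disutil D l oc i \<le> minmax_value n D l oc"
  unfolding minmax_value_def by (intro Max_ge) auto

lemma minsum_value_const:
  "(\<And>i. i < n \<Longrightarrow> disutil D l oc i = d) \<Longrightarrow> minsum_value n D l oc = n * d"
  unfolding minsum_value_def by simp

lemma minmax_value_const:
  assumes "0 < n" and "\<And>i. i < n \<Longrightarrow> disutil D l oc i = d"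
  shows "minmax_value n D l oc = d"
proof -
  have "disutil D l oc ` {..<n} = {d}"
    using assms by force
  then show ?thesis
    unfolding minmax_value_def by simp
qed

lemma opt_value_eqI:
  assumes bounded: "\<And>oc. is_outcome P l oc \<Longrightarrow> W n D l oc \<le> B"
    and lower: "\<And>oc. is_outcome P l oc \<Longrightarrow> v \<le> W n D l oc"
    and attained: "is_outcome P l oc" "W n D l oc = v"
  shows "opt_value W n P D l = v"
  unfolding opt_value_def
proof (rule Min_eqI)
  show "finite {W n D l oc |oc. is_outcome P l oc}"
    by (rule finite_subset[of _ "{..B}"]) (auto dest: bounded)
  show "v \<le> y" if "y \<in> {W n D l oc |oc. is_outcome P l oc}" for y
    using that lower by blast
  show "v \<in> {W n D l oc |oc. is_outcome P l oc}"
    using attained by blast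
qed

lemma opt_equitable_value_eqI:
  assumes "\<And>oc. is_outcome P l oc \<Longrightarrow> equitable n D l oc \<Longrightarrow> W n D l oc = v"
    and "\<exists>oc. is_outcome P l oc \<and> equitable n D l oc"
  shows "opt_equitable_value W n P D l = v"
proof -
  have "{W n D l oc |oc. is_outcome P l oc \<and> equitable n D l oc} = {v}"
    using assms by blast
  then show ?thesis
    unfolding opt_equitable_value_def by simp
qed

definition gap_disapproval :: "nat \<Rightarrow> nat \<Rightarrow> nat set" where
  "gap_disapproval i k =
    (if k = 0 then (if i = 0 then UNIV else {})
     else if i = k then {} else if i = 0 then {2} else {1, 2})"

lemma gap_disutil_first_agent_pos: "0 < l \<Longrightarrow> 0 < disutil gap_disapproval l oc 0"
  unfolding disutil_def gap_disapproval_def by (auto simp: card_gt_0_iff)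

lemma gap_disutil_other_agent:
  assumes "is_outcome {0, 1, 2} l oc" and "0 < i"
  shows "disutil gap_disapproval l oc i = card ({k \<in> {1..<l}. oc k \<noteq> 0} - {i})"
proof -
  have "{k \<in> {0..<l}. oc k \<in> gap_disapproval i k} = {k \<in> {1..<l}. oc k \<noteq> 0} - {i}"
    using assms unfolding is_outcome_def gap_disapproval_def by auto
  then show ?thesis
    unfolding disutil_def by simp
qed

lemma gap_disutil_all_zero:
  "disutil gap_disapproval l (\<lambda>_. 0) i = (if i = 0 \<and> 0 < l then 1 else 0)"
proof -
  have "{k \<in> {0..<l}. 0 \<in> gap_disapproval i k} = (if i = 0 \<and> 0 < l then {0} else {})"
    unfolding gap_disapproval_def by auto
  then show ?thesis
    unfolding disutil_def by simp
qed

lemma gap_disutil_equitable: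
  assumes n: "2 \<le> n" and oc: "is_outcome {0, 1, 2} n oc"
    and eq: "equitable n gap_disapproval n oc" and "i < n"
  shows "disutil gap_disapproval n oc i = n - 2"
proof -
  define S where "S = {k \<in> {1..<n}. oc k \<noteq> 0}"
  have other: "disutil gap_disapproval n oc j = card S - (if j \<in> S then 1 else 0)"
    if "0 < j" for j
    using gap_disutil_other_agent[OF oc that] by (simp add: S_def card_Diff_singleton_if)
  have same: "disutil gap_disapproval n oc j = disutil gap_disapproval n oc j'"
    if "j < n" "j' < n" for j j'
    using eq that unfolding equitable_def by blast
  have S_full: "S = {1..<n}"
  proof (rule ccontr)
    assume "S \<noteq> {1..<n}"
    moreover have "S \<subseteq> {1..<n}"
      unfolding S_def by auto
    ultimately obtain i0 where i0: "i0 \<in> {1..<n}" "i0 \<notin> S"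
      by blast
    have "0 < disutil gap_disapproval n oc i0"
      using same[of 0 i0] gap_disutil_first_agent_pos[of n oc] i0 by auto
    then obtain j where "j \<in> S"
      using other[of i0] i0 by fastforce
    moreover have "finite S"
      unfolding S_def by simp
    ultimately have "0 < card S" "j \<in> {1..<n}"
      unfolding S_def by (auto simp: card_gt_0_iff)
    then show False
      using same[of i0 j] other[of i0] other[of j] i0 \<open>j \<in> S\<close> by auto
  qed
  have "disutil gap_disapproval n oc 1 = n - 2"
    using other[of 1] n S_full by simp
  then show ?thesis
    using other[of i] same[of i 1] \<open>i < n\<close> n S_full by (cases "i = 0") auto
qed

lemma gap_equitable_witness:
  assumes "3 \<le> n"
  shows "\<exists>oc. is_outcome {0, 1, 2} n oc \<and> equitable n gap_disapproval n oc"
proof -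
  let ?oc = "\<lambda>k. if k \<in> {1, 2} then 1 else (2::nat)"
  have "{k \<in> {0..<n}. ?oc k \<in> gap_disapproval 0 k} = insert 0 {3..<n}"
    using assms unfolding gap_disapproval_def by auto
  then have first: "disutil gap_disapproval n ?oc 0 = n - 2"
    unfolding disutil_def using assms by simp
  have "{k \<in> {1..<n}. ?oc k \<noteq> 0} = {1..<n}"
    by auto
  then have other: "disutil gap_disapproval n ?oc i = n - 2" if "0 < i" "i < n" for i
    using gap_disutil_other_agent[of n ?oc i] that by (simp add: is_outcome_def)
  have "equitable n gap_disapproval n ?oc"
    unfolding equitable_def using first other by (metis gr0I)
  moreover have "is_outcome {0, 1, 2} n ?oc"
    by (simp add: is_outcome_def)
  ultimately show ?thesis
    by blast
qed

lemma gap_opt_value: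
  assumes "0 < n" and "W = minsum_value \<or> W = minmax_value"
  shows "opt_value W n {0, 1, 2} gap_disapproval n = 1"
proof (rule opt_value_eqI)
  show "W n gap_disapproval n oc \<le> n * n" for oc
    using assms(2) minsum_value_le minmax_value_le[THEN order_trans] by (auto simp: le_square)
  show "1 \<le> W n gap_disapproval n oc" for oc
    using assms gap_disutil_first_agent_pos[of n oc]
      disutil_le_minsum_value[of 0 n _ n oc] disutil_le_minmax_value[of 0 n _ n oc]
    by (auto simp: Suc_le_eq intro: less_le_trans)
  show "is_outcome {0, 1, 2} n (\<lambda>_. 0)"
    by (simp add: is_outcome_def)
  have "minsum_value n gap_disapproval n (\<lambda>_. 0) = 1"
    using assms(1) by (simp add: minsum_value_def gap_disutil_all_zero sum.delta)
  moreover have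
    "disutil gap_disapproval n (\<lambda>_. 0) ` {..<n} = {1} \<union> (if 1 < n then {0} else {})"
    using assms(1) by (auto simp: gap_disutil_all_zero image_iff)
  then have "minmax_value n gap_disapproval n (\<lambda>_. 0) = 1"
    by (simp add: minmax_value_def insert_commute)
  ultimately show "W n gap_disapproval n (\<lambda>_. 0) = 1"
    using assms(2) by auto
qed

lemma gap_opt_equitable_minsum:
  "3 \<le> n \<Longrightarrow> opt_equitable_value minsum_value n {0, 1, 2} gap_disapproval n = n * (n - 2)"
  by (rule opt_equitable_value_eqI[OF _ gap_equitable_witness])
     (auto simp: gap_disutil_equitable minsum_value_const)

lemma gap_opt_equitable_minmax:
  "3 \<le> n \<Longrightarrow> opt_equitable_value minmax_value n {0, 1, 2} gap_disapproval n = n - 2"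
  by (rule opt_equitable_value_eqI[OF _ gap_equitable_witness])
     (auto simp: gap_disutil_equitable minmax_value_const)

lemma gap_opt_equitable_value_lower_bounds:
  assumes "3 \<le> n"
  shows "(real n)\<^sup>2 / 3 \<le> real (opt_equitable_value minsum_value n {0, 1, 2} gap_disapproval n)"
    and "real n / 3 \<le> real (opt_equitable_value minmax_value n {0, 1, 2} gap_disapproval n)"
proof -
  show third: "real n / 3 \<le> real (opt_equitable_value minmax_value n {0, 1, 2} gap_disapproval n)"
    using assms by (subst gap_opt_equitable_minmax) (simp_all add: of_nat_diff)
  show "(real n)\<^sup>2 / 3 \<le> real (opt_equitable_value minsum_value n {0, 1, 2} gap_disapproval n)"
    using mult_left_mono[OF third, of "real n"] assms
    unfolding gap_opt_equitable_minsum[OF assms] gap_opt_equitable_minmax[OF assms]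
    by (simp add: power2_eq_square)
qed

theorem theorem13:
  shows "(\<exists>c::real. c > 0 \<and> (\<exists>N. \<forall>n\<ge>N. \<exists>P D l.
            finite P \<and> P \<noteq> {} \<and>
            (\<exists>oc. is_outcome P l oc \<and> equitable n D l oc) \<and>
            opt_value minsum_value n P D l > 0 \<and>
            real (opt_equitable_value minsum_value n P D l)
              \<ge> c * (real n)^2 * real (opt_value minsum_value n P D l)))
       \<and> (\<exists>c::real. c > 0 \<and> (\<exists>N. \<forall>n\<ge>N. \<exists>P D l.
            finite P \<and> P \<noteq> {} \<and>
            (\<exists>oc. is_outcome P l oc \<and> equitable n D l oc) \<and>
            opt_value minmax_value n P D l > 0 \<and>
            real (opt_equitable_value minmax_value n P D l)
              \<ge> c * real n * real (opt_value minmax_value n P D l)))"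
  apply (intro conjI exI[of _ "1/3 :: real"] exI[of _ "3 :: nat"] allI impI)
  subgoal by simp
  subgoal for n
    using gap_opt_value[of n minsum_value] gap_opt_equitable_value_lower_bounds(1)[of n]
      gap_equitable_witness[of n]
    by (intro exI[of _ "{0, 1, 2}"] exI[of _ gap_disapproval] exI[of _ n]) simp
  subgoal by simp
  subgoal for n
    using gap_opt_value[of n minmax_value] gap_opt_equitable_value_lower_bounds(2)[of n]
      gap_equitable_witness[of n]
    by (intro exI[of _ "{0, 1, 2}"] exI[of _ gap_disapproval] exI[of _ n]) simp
  done

end
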